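(* Let $L'$ and $L$ be layers in a layered sequent $G$, and let $S$ be a layer simulation between $L'$ and $L$. Then for every $x\in L$ there is $x'\in L'$ with $x' \mathrel{S} x$.
   Context: A sequent $G$ is $\mathcal{R},\Gamma\Rightarrow\Delta$ with $\mathcal{R}$ a set of relational atoms $xRy$, $x\le y$ between labels and $\Gamma,\Delta$ multisets of labelled formulas $x{:}A$; $xR_Gy$, $x\le_G y$ mean the atom is in $\mathcal{R}$. A layer is an equivalence class of the reflexive-transitive closure of $R_G\cup R_G^{-1}$. $G$ is layered if for all labels $x,x',y,y'$: (1) if $x,y$ lie in the same layer and $x\ne y$ then neither $x\le_G y$ nor $y\le_G x$; (2) if $x,y$ lie in the same layer, $x',y'$ lie in the same layer, $x\le_G x'$ and $x\ne x'$, then not $y'\le_G y$. Labels $x,y$ are equivalent, $x\sim y$, iff exactly the same formulas occur at $x$ and at $y$ in $\Gamma$, and exactly the same formulas occur at $x$ and at $y$ in $\Delta$. A layer simulation between $L'$ and $L$ is a non-empty relation $S\subseteq (L'\times L)\cap\sim$ such that for all $x'\in L'$, $x,y\in L$: (S1) if $x'Sx$ and $xR_Gy$ then there is $y'\in L'$ with $x'R_Gy'$ and $y'Sy$; (S2) if $x'Sx$ and $yR_Gx$ then there is $y'\in L'$ with $y'R_Gx'$ and $y'Sy$. *)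

theory Defs
  imports Main "HOL-Library.Multiset"
begin

datatype 'l rel_atom = RelR 'l 'l | RelLeq 'l 'l

text \<open>A labelled sequent R, Gamma => Delta; a labelled formula x:A is the pair (x, A).
  Formulas are of an arbitrary type 'f.\<close>
record ('l, 'f) sequent =
  rels :: "'l rel_atom set"
  ante :: "('l \<times> 'f) multiset"
  succ :: "('l \<times> 'f) multiset"

definition R_G :: "('l, 'f) sequent \<Rightarrow> ('l \<times> 'l) set" where
  "R_G G = {(x, y). RelR x y \<in> rels G}"

definition Leq_G :: "('l, 'f) sequent \<Rightarrow> ('l \<times> 'l) set" where
  "Leq_G G = {(x, y). RelLeq x y \<in> rels G}"

definition labels :: "('l, 'f) sequent \<Rightarrow> 'l set" where
  "labels G = {x. \<exists>y. RelR x y \<in> rels G \<or> RelR y x \<in> rels G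
                     \<or> RelLeq x y \<in> rels G \<or> RelLeq y x \<in> rels G}
             \<union> fst ` set_mset (ante G) \<union> fst ` set_mset (succ G)"

definition same_layer :: "('l, 'f) sequent \<Rightarrow> 'l \<Rightarrow> 'l \<Rightarrow> bool" where
  "same_layer G x y \<longleftrightarrow> (x, y) \<in> (R_G G \<union> (R_G G)\<inverse>)\<^sup>*"

definition is_layer :: "('l, 'f) sequent \<Rightarrow> 'l set \<Rightarrow> bool" where
  "is_layer G L \<longleftrightarrow> (\<exists>x \<in> labels G. L = {y. same_layer G x y})"

definition layered :: "('l, 'f) sequent \<Rightarrow> bool" where
  "layered G \<longleftrightarrow>
     (\<forall>x y. same_layer G x y \<and> x \<noteq> y \<longrightarrow> (x, y) \<notin> Leq_G G \<and> (y, x) \<notin> Leq_G G) \<and>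
     (\<forall>x x' y y'. same_layer G x y \<and> same_layer G x' y' \<and> (x, x') \<in> Leq_G G \<and> x \<noteq> x'
        \<longrightarrow> (y', y) \<notin> Leq_G G)"

definition label_equiv :: "('l, 'f) sequent \<Rightarrow> 'l \<Rightarrow> 'l \<Rightarrow> bool" where
  "label_equiv G x y \<longleftrightarrow>
     {A. (x, A) \<in># ante G} = {A. (y, A) \<in># ante G} \<and>
     {A. (x, A) \<in># succ G} = {A. (y, A) \<in># succ G}"

definition layer_simulation ::
    "('l, 'f) sequent \<Rightarrow> 'l set \<Rightarrow> 'l set \<Rightarrow> ('l \<times> 'l) set \<Rightarrow> bool" where
  "layer_simulation G L' L S \<longleftrightarrow>
     S \<noteq> {} \<and> S \<subseteq> L' \<times> L \<and> (\<forall>(x', x) \<in> S. label_equiv G x' x) \<and>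
     (\<forall>x' \<in> L'. \<forall>x \<in> L. \<forall>y \<in> L.
        (x', x) \<in> S \<and> (x, y) \<in> R_G G \<longrightarrow> (\<exists>y' \<in> L'. (x', y') \<in> R_G G \<and> (y', y) \<in> S)) \<and>
     (\<forall>x' \<in> L'. \<forall>x \<in> L. \<forall>y \<in> L.
        (x', x) \<in> S \<and> (y, x) \<in> R_G G \<longrightarrow> (\<exists>y' \<in> L'. (y', x') \<in> R_G G \<and> (y', y) \<in> S))"

end

theory Submission
  imports Defs
begin

text \<open>A layer is connected under R and its converse, and a simulation transports its
  non-empty domain along every R-edge in either direction (clauses S1 and S2). Hence the
  domain of S is all of L.\<close>

lemma same_layer_sym: "same_layer G x y \<Longrightarrow> same_layer G y x"
  unfolding same_layer_def
  by (metis converse_Un converse_converse rtrancl_converseI sup_commute)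

lemma same_layer_trans: "same_layer G x y \<Longrightarrow> same_layer G y z \<Longrightarrow> same_layer G x z"
  unfolding same_layer_def by (rule rtrancl_trans)

lemma is_layer_same_layer:
  assumes "is_layer G L" and "x \<in> L" and "y \<in> L"
  shows "same_layer G x y"
proof -
  from \<open>is_layer G L\<close> obtain z where L: "L = {y. same_layer G z y}"
    unfolding is_layer_def by blast
  show ?thesis
    using assms(2,3) unfolding L by (auto intro: same_layer_trans same_layer_sym)
qed

lemma is_layer_closed:
  assumes "is_layer G L" and "x \<in> L" and "same_layer G x y"
  shows "y \<in> L"
  using assms unfolding is_layer_def by (auto intro: same_layer_trans)

lemma layer_simulation_propagates:
  assumes sim: "layer_simulation G L' L S" and L: "is_layer G L"
    and "(x', x) \<in> S" and "same_layer G x y"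
  shows "\<exists>y' \<in> L'. (y', y) \<in> S"
proof -
  from \<open>same_layer G x y\<close> have "(x, y) \<in> (R_G G \<union> (R_G G)\<inverse>)\<^sup>*"
    unfolding same_layer_def .
  then show ?thesis
  proof (induction rule: rtrancl_induct)
    case base
    then show ?case using \<open>(x', x) \<in> S\<close> sim unfolding layer_simulation_def by blast
  next
    case (step y z)
    then obtain y' where y'L': "y' \<in> L'" and y'y: "(y', y) \<in> S" by blast
    have yL: "y \<in> L" using y'y sim unfolding layer_simulation_def by blast
    have "same_layer G y z"
      using step.hyps(2) unfolding same_layer_def by blast
    with L yL have zL: "z \<in> L" by (rule is_layer_closed)
    from step.hyps(2) consider "(y, z) \<in> R_G G" | "(z, y) \<in> R_G G" by blast
    then show ?case
    proof cases
      case 1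
      then show ?thesis
        using sim y'L' yL zL y'y unfolding layer_simulation_def by blast
    next
      case 2
      then show ?thesis
        using sim y'L' yL zL y'y unfolding layer_simulation_def by blast
    qed
  qed
qed

theorem mainTheorem6:
  fixes G :: "('l, 'f) sequent" and L' L :: "'l set" and S :: "('l \<times> 'l) set"
  assumes "layered G"
    and "is_layer G L'"
    and "is_layer G L"
    and "layer_simulation G L' L S"
  shows "\<forall>x \<in> L. \<exists>x' \<in> L'. (x', x) \<in> S"
proof
  fix x assume "x \<in> L"
  obtain a' a where aS: "(a', a) \<in> S" and "a \<in> L"
    using assms(4) unfolding layer_simulation_def by blast
  with assms(3) \<open>x \<in> L\<close> have "same_layer G a x" by (blast intro: is_layer_same_layer)
  with assms(4,3) aS show "\<exists>x' \<in> L'. (x', x) \<in> S" by (rule layer_simulation_propagates)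
qed

end
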